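(* In the setting described in the context, suppose that for all $k=1,\dots,d$, $$\frac{1}{\phi-b}\sum_{j\in{\mathcal{V}}\setminus{\mathcal{A}}}\big\|({\bf I}-H_j^\top H_j)e_k\big\|_1<1 .$$ Then for each $j\in{\mathcal{V}}\setminus{\mathcal{A}}$ and each $\lambda\in(0,1)$, $$\lim_{t\to\infty}R_j(\lambda,t)=0\quad\text{almost surely},\qquad\text{where } R_j(\lambda,t)=\sum_{m=0}^{t-1}\lambda^m\Big\|\frac{1}{t-m}\sum_{r=1}^{t-m}w_j(r)\Big\| .$$
   Context: Agents ${\mathcal{V}}=\{1,\dots,n\}$; an unknown vector $\theta^*\in\mathbb{R}^d$; agent $i$ has a matrix $H_i\in\mathbb{R}^{n_i\times d}$ and observes $y_i(t)=H_i\theta^*+w_i(t)$ at times $t=1,2,\dots$. For each agent $i$, the noise sequence $(w_i(t))_{t\ge1}$ is i.i.d. with $\mathbb{E}[w_i(t)]=0$ and $\mathbb{E}[w_i(t)w_i(t)^\top]=\Sigma_i$, and there is a constant $C>0$ with $\Pr(\|w_i(t)\|\le C)=1$ for all $i,t$; noise sequences of distinct agents are independent. An unknown set ${\mathcal{A}}\subseteq{\mathcal{V}}$ of Byzantine (faulty) agents has $|{\mathcal{A}}|\le b$, and $\phi=|{\mathcal{V}}\setminus{\mathcal{A}}|$. $\|\cdot\|$ is the Euclidean norm, $\|\cdot\|_1$ the $\ell_1$ norm, $e_k$ the $k$-th standard basis vector, ${\bf I}$ the $d\times d$ identity. *)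

theory Defs
  imports "HOL-Probability.Probability"
begin

text \<open>Finite-dimensional vectors are represented as functions nat \<Rightarrow> real,
  whose relevant components are those with index below the dimension.\<close>

definition vnorm :: "nat \<Rightarrow> (nat \<Rightarrow> real) \<Rightarrow> real" where
  "vnorm n x = sqrt (\<Sum>k<n. (x k)^2)"

definition vnorm1 :: "nat \<Rightarrow> (nat \<Rightarrow> real) \<Rightarrow> real" where
  "vnorm1 n x = (\<Sum>k<n. \<bar>x k\<bar>)"

definition col_I_minus_HtH :: "nat \<Rightarrow> (nat \<Rightarrow> nat \<Rightarrow> real) \<Rightarrow> nat \<Rightarrow> nat \<Rightarrow> real" where
  "col_I_minus_HtH nrow H k = (\<lambda>i. (if i = k then 1 else 0) - (\<Sum>l<nrow. H l i * H l k))"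

definition Rfun :: "nat \<Rightarrow> (nat \<Rightarrow> nat \<Rightarrow> real) \<Rightarrow> real \<Rightarrow> nat \<Rightarrow> real" where
  "Rfun n w lam t = (\<Sum>m<t. lam ^ m *
      vnorm n (\<lambda>k. (1 / real (t - m)) * (\<Sum>r=1..t - m. w r k)))"

end

theory Submission
  imports Defs "HOL-Probability.Hoeffding"
begin

text \<open>Each coordinate of agent j's noise is an independent, bounded, zero-mean sequence.
  By Hoeffding's inequality the probability that its running average exceeds e in absolute
  value decays geometrically in the number of samples, so Borel--Cantelli yields the strong
  law of large numbers almost surely. On that event the norms g s of the running averages tend
  to 0, and R_j(lambda, t) is the convolution of g with the summable sequence lambda^m, which
  tends to 0 by Tannery's theorem.\<close>

lemma tendsto_zero_if_eventually_norm_less_inverse_Suc: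
  fixes f :: "'b \<Rightarrow> 'c::real_normed_vector"
  assumes "\<And>q::nat. eventually (\<lambda>x. norm (f x) < 1 / real (Suc q)) F"
  shows "(f \<longlongrightarrow> 0) F"
proof (rule tendstoI)
  fix e :: real assume "e > 0"
  then obtain q where "1 / real (Suc q) < e"
    using nat_approx_posE by blast
  with assms[of q] show "eventually (\<lambda>x. dist (f x) 0 < e) F"
    by (auto elim: eventually_mono)
qed

lemma convolution_tendsto_zero:
  fixes c g :: "nat \<Rightarrow> 'a::{real_normed_algebra, banach}"
  assumes g: "g \<longlonglongrightarrow> 0" and c: "summable (\<lambda>m. norm (c m))"
  shows "(\<lambda>t. \<Sum>m<t. c m * g (t - m)) \<longlonglongrightarrow> 0"
proof -
  obtain K where K: "\<And>s. norm (g s) \<le> K"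
    using convergent_imp_Bseq[OF convergentI[OF g]] by (auto simp: Bseq_def)
  define a where "a m t = (if m < t then c m * g (t - m) else 0)" for m t
  have "(\<lambda>t. a m t) \<longlonglongrightarrow> 0" for m
  proof -
    have "(\<lambda>t. c m * g (t - m)) \<longlonglongrightarrow> c m * 0"
      using LIMSEQ_offset[of "\<lambda>s. g (s - m)" m] g by (intro tendsto_mult tendsto_const) simp
    moreover have "eventually (\<lambda>t. c m * g (t - m) = a m t) sequentially"
      unfolding a_def eventually_sequentially by (intro exI[of _ "Suc m"]) auto
    ultimately show ?thesis
      by (simp add: Lim_transform_eventually)
  qed
  moreover have "eventually (\<lambda>(m, t). norm (a m t) \<le> norm (c m) * K) (at_top \<times>\<^sub>F sequentially)"
    using K by (intro always_eventually)
      (auto simp: a_def intro: order_trans[OF norm_mult_ineq] mult_left_mono order_trans[OF norm_ge_zero])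
  moreover have "summable (\<lambda>m. norm (c m) * K)"
    using c by (rule summable_mult2)
  ultimately have "(\<lambda>t. \<Sum>m. a m t) \<longlonglongrightarrow> (\<Sum>m. 0)"
    using tannerys_theorem[of a "\<lambda>_. 0"] by simp
  moreover have "(\<Sum>m. a m t) = (\<Sum>m<t. c m * g (t - m))" for t
    by (subst suminf_finite[of "{..<t}"]) (auto simp: a_def)
  ultimately show ?thesis
    by simp
qed

lemma abs_le_vnorm: "k < n \<Longrightarrow> \<bar>v k\<bar> \<le> vnorm n v"
  unfolding vnorm_def
  by (metis real_sqrt_abs real_sqrt_le_mono member_le_sum finite_lessThan lessThan_iff zero_le_power2)

lemma vnorm_tendsto_zero:
  assumes "\<And>k. k < n \<Longrightarrow> ((\<lambda>t. f t k) \<longlongrightarrow> 0) F"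
  shows "((\<lambda>t. vnorm n (f t)) \<longlongrightarrow> 0) F"
proof -
  have "((\<lambda>t. sqrt (\<Sum>k<n. (f t k)\<^sup>2)) \<longlongrightarrow> sqrt (\<Sum>k<n. 0\<^sup>2)) F"
    using assms by (intro tendsto_intros) auto
  then show ?thesis
    by (simp add: vnorm_def)
qed

context prob_space
begin

context
  fixes X :: "nat \<Rightarrow> 'a \<Rightarrow> real" and C :: real
  assumes indep: "indep_vars (\<lambda>_. borel) X {1..}"
    and bounded: "\<And>r. r \<ge> 1 \<Longrightarrow> AE x in M. \<bar>X r x\<bar> \<le> C"
    and C_pos: "C > 0"
    and zero_mean: "\<And>r. r \<ge> 1 \<Longrightarrow> expectation (X r) = 0"
begin

lemma prob_abs_sum_ge_le_geometric:
  assumes e: "e > 0"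
  shows "prob {x \<in> space M. real n * e \<le> \<bar>\<Sum>r=1..n. X r x\<bar>} \<le> 2 * exp (- e\<^sup>2 / (2 * C\<^sup>2)) ^ n"
proof (cases "n = 0")
  case True
  then show ?thesis
    by (simp add: prob_space)
next
  case False
  interpret Hoeffding_ineq M "{1..n}" X "\<lambda>_. -C" "\<lambda>_. C" 0
  proof unfold_locales
    show "indep_vars (\<lambda>_. borel) X {1..n}"
      by (rule indep_vars_subset[OF indep]) auto
    show "AE x in M. X r x \<in> {-C..C}" if "r \<in> {1..n}" for r
      using bounded[of r] that by (auto elim!: eventually_mono)
    show "0 \<equiv> \<Sum>r\<in>{1..n}. expectation (X r)"
      using zero_mean by simp
  qed auto
  have width: "(\<Sum>r\<in>{1..n}. (C - - C)\<^sup>2) = real n * (4 * C\<^sup>2)"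
    by (simp add: power2_eq_square algebra_simps)
  have "prob {x \<in> space M. real n * e \<le> \<bar>\<Sum>r=1..n. X r x\<bar>}
      \<le> 2 * exp (-2 * (real n * e)\<^sup>2 / (\<Sum>r\<in>{1..n}. (C - - C)\<^sup>2))"
    using Hoeffding_ineq_abs_ge[of "real n * e"] e False C_pos width by simp
  also have "-2 * (real n * e)\<^sup>2 / (\<Sum>r\<in>{1..n}. (C - - C)\<^sup>2) = real n * (- e\<^sup>2 / (2 * C\<^sup>2))"
    using False C_pos unfolding width by (simp add: field_simps power2_eq_square)
  also have "exp (real n * (- e\<^sup>2 / (2 * C\<^sup>2))) = exp (- e\<^sup>2 / (2 * C\<^sup>2)) ^ n"
    by (rule exp_of_nat_mult)
  finally show ?thesis .
qed

lemma AE_eventually_abs_average_less: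
  assumes e: "e > 0"
  shows "AE x in M. eventually (\<lambda>n. \<bar>1 / real n * (\<Sum>r=1..n. X r x)\<bar> < e) sequentially"
proof -
  have [measurable]: "X r \<in> borel_measurable M" if "r \<ge> 1" for r
    using indep that unfolding indep_vars_def by auto
  define B where "B n = {x \<in> space M. real n * e \<le> \<bar>\<Sum>r=1..n. X r x\<bar>}" for n
  have "B n \<in> sets M" for n
    unfolding B_def by measurable
  moreover have "summable (\<lambda>n. measure M (B n))"
  proof (rule summable_comparison_test')
    show "summable (\<lambda>n. 2 * exp (- e\<^sup>2 / (2 * C\<^sup>2)) ^ n)"
      using e C_pos by (intro summable_mult summable_geometric) auto
    show "norm (measure M (B n)) \<le> 2 * exp (- e\<^sup>2 / (2 * C\<^sup>2)) ^ n" for n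
      using prob_abs_sum_ge_le_geometric[OF e] by (simp add: B_def)
  qed
  ultimately have "AE x in M. eventually (\<lambda>n. x \<in> space M - B n) sequentially"
    by (intro borel_cantelli_AE1) (auto simp: emeasure_eq_measure)
  then show ?thesis
  proof eventually_elim
    case (elim x)
    then show ?case
      by (rule eventually_mono[OF eventually_conj[OF _ eventually_gt_at_top[of 0]]])
        (auto simp: B_def abs_mult field_simps)
  qed
qed

lemma strong_law_bounded_zero_mean:
  "AE x in M. (\<lambda>n. 1 / real n * (\<Sum>r=1..n. X r x)) \<longlonglongrightarrow> 0"
proof -
  have "AE x in M. \<forall>q::nat.
      eventually (\<lambda>n. \<bar>1 / real n * (\<Sum>r=1..n. X r x)\<bar> < 1 / real (Suc q)) sequentially"
    unfolding AE_all_countable by (intro allI AE_eventually_abs_average_less) simp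
  then show ?thesis
    by eventually_elim (simp add: tendsto_zero_if_eventually_norm_less_inverse_Suc)
qed

end

end

theorem lemma2:
  fixes M :: "'a measure"
    and N d b :: nat
    and A :: "nat set"
    and nr :: "nat \<Rightarrow> nat"
    and H :: "nat \<Rightarrow> nat \<Rightarrow> nat \<Rightarrow> real"
    and w :: "nat \<Rightarrow> nat \<Rightarrow> 'a \<Rightarrow> nat \<Rightarrow> real"
    and Sigma :: "nat \<Rightarrow> nat \<Rightarrow> nat \<Rightarrow> real"
    and C :: real
  defines "V \<equiv> {1..N}"
  defines "phi \<equiv> card (V - A)"
  assumes P: "prob_space M"
    and meas: "\<And>i t k. i \<in> V \<Longrightarrow> t \<ge> 1 \<Longrightarrow> k < nr i \<Longrightarrow>
                 (\<lambda>\<omega>. w i t \<omega> k) \<in> borel_measurable M"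
    and iid_indep: "\<And>i. i \<in> V \<Longrightarrow> prob_space.indep_vars M (\<lambda>_. PiM {..<nr i} (\<lambda>_. borel))
                 (\<lambda>t \<omega>. restrict (w i t \<omega>) {..<nr i}) {1..}"
    and iid_distr: "\<And>i t. i \<in> V \<Longrightarrow> t \<ge> 1 \<Longrightarrow>
                 distr M (PiM {..<nr i} (\<lambda>_. borel)) (\<lambda>\<omega>. restrict (w i t \<omega>) {..<nr i})
               = distr M (PiM {..<nr i} (\<lambda>_. borel)) (\<lambda>\<omega>. restrict (w i 1 \<omega>) {..<nr i})"
    and mean0: "\<And>i t k. i \<in> V \<Longrightarrow> t \<ge> 1 \<Longrightarrow> k < nr i \<Longrightarrow>
                 integrable M (\<lambda>\<omega>. w i t \<omega> k) \<and> (\<integral>\<omega>. w i t \<omega> k \<partial>M) = 0"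
    and cov: "\<And>i t k l. i \<in> V \<Longrightarrow> t \<ge> 1 \<Longrightarrow> k < nr i \<Longrightarrow> l < nr i \<Longrightarrow>
                 (\<integral>\<omega>. w i t \<omega> k * w i t \<omega> l \<partial>M) = Sigma i k l"
    and Cpos: "C > 0"
    and bdd: "\<And>i t. i \<in> V \<Longrightarrow> t \<ge> 1 \<Longrightarrow>
                 prob_space.prob M {\<omega> \<in> space M. vnorm (nr i) (w i t \<omega>) \<le> C} = 1"
    and indep_agents: "prob_space.indep_vars M
                 (\<lambda>i. PiM {1..} (\<lambda>_. PiM {..<nr i} (\<lambda>_. borel)))
                 (\<lambda>i \<omega>. \<lambda>t\<in>{1..}. restrict (w i t \<omega>) {..<nr i}) V"
    and A_sub: "A \<subseteq> V"
    and A_card: "card A \<le> b"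
    and cond: "\<And>k. k < d \<Longrightarrow>
                 (1 / (real phi - real b)) *
                   (\<Sum>j\<in>V - A. vnorm1 d (col_I_minus_HtH (nr j) (H j) k)) < 1"
  shows "\<forall>j\<in>V - A. \<forall>lam\<in>{0<..<1::real}.
           AE \<omega> in M. (\<lambda>t. Rfun (nr j) (\<lambda>r. w j r \<omega>) lam t) \<longlonglongrightarrow> 0"
proof (intro ballI)
  fix j lam assume "j \<in> V - A" and lam: "lam \<in> {0<..<1::real}"
  interpret prob_space M by (rule P)
  from \<open>j \<in> V - A\<close> have j: "j \<in> V" by simp
  have "AE \<omega> in M. (\<lambda>s. 1 / real s * (\<Sum>r=1..s. w j r \<omega> k)) \<longlonglongrightarrow> 0" if k: "k < nr j" for k
  proof (rule strong_law_bounded_zero_mean)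
    show "indep_vars (\<lambda>_. borel) (\<lambda>r \<omega>. w j r \<omega> k) {1..}"
      using indep_vars_compose2[OF iid_indep[OF j], of "\<lambda>_ v. v k" "\<lambda>_. borel"] k by simp
    show "AE \<omega> in M. \<bar>w j r \<omega> k\<bar> \<le> C" if "r \<ge> 1" for r
      using AE_prob_1[OF bdd[OF j that]] abs_le_vnorm[OF k]
      by (auto elim!: eventually_mono intro: order_trans)
    show "expectation (\<lambda>\<omega>. w j r \<omega> k) = 0" if "r \<ge> 1" for r
      using mean0[OF j that k] by simp
  qed (rule Cpos)
  then have "AE \<omega> in M. \<forall>k<nr j. (\<lambda>s. 1 / real s * (\<Sum>r=1..s. w j r \<omega> k)) \<longlonglongrightarrow> 0"
    unfolding AE_all_countable by auto
  then show "AE \<omega> in M. (\<lambda>t. Rfun (nr j) (\<lambda>r. w j r \<omega>) lam t) \<longlonglongrightarrow> 0"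
  proof eventually_elim
    case (elim \<omega>)
    have "summable (\<lambda>m. norm (lam ^ m))"
      using lam by (simp add: norm_power summable_geometric)
    with vnorm_tendsto_zero[OF elim[rule_format]] show ?case
      unfolding Rfun_def by (rule convolution_tendsto_zero)
  qed
qed

end
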